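(* Let $r\ge1$ and let $\sigma=(1,1,\ldots,1)$ be the partition of $r$ into $r$ parts equal to $1$. Let $H=H(n,r,q\mid\sigma)$ with $n\ge(r+1)^2$ and $q\ge r$. Then $H$ has a maximum matching leaving exactly $p$ vertices unmatched, where $p$ is the remainder of $nq$ upon division by $r$; hence $\nu(H)=\left\lfloor\frac{nq}{r}\right\rfloor$.
   Context: A $\sigma$-hypergraph $H=H(n,r,q\mid\sigma)$, for a partition $\sigma$ of $r$, is the $r$-uniform hypergraph whose vertex set is the disjoint union of $n$ classes $V_1,\ldots,V_n$, each of size $q$; an $r$-subset $K$ of vertices is an edge iff the multiset of non-zero values $|K\cap V_i|$ equals $\sigma$ (so for $\sigma=(1,\ldots,1)$ the edges are the $r$-sets meeting $r$ distinct classes in one vertex each). A matching is a set of pairwise vertex-disjoint edges; $\nu(H)$ is the maximum size of a matching. *)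

theory Defs
  imports Main "HOL-Library.Multiset"
begin

text \<open>Vertices of H(n,r,q|sigma): pairs (i,j), i<n the class index, j<q the position
 inside class V_i.\<close>
definition sh_vertices :: "nat \<Rightarrow> nat \<Rightarrow> (nat \<times> nat) set" where
  "sh_vertices n q = {0..<n} \<times> {0..<q}"

definition sh_class :: "nat \<Rightarrow> nat \<Rightarrow> (nat \<times> nat) set" where
  "sh_class q i = {i} \<times> {0..<q}"

definition sh_profile :: "nat \<Rightarrow> nat \<Rightarrow> (nat \<times> nat) set \<Rightarrow> nat multiset" where
  "sh_profile n q K =
     filter_mset (\<lambda>x. x \<noteq> 0) (image_mset (\<lambda>i. card (K \<inter> sh_class q i)) (mset_set {0..<n}))"

text \<open>Edges of the sigma-hypergraph H(n,r,q|sigma), sigma a partition of r given as a multiset.\<close>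
definition sh_edges :: "nat \<Rightarrow> nat \<Rightarrow> nat \<Rightarrow> nat multiset \<Rightarrow> (nat \<times> nat) set set" where
  "sh_edges n r q \<sigma> =
     {K. K \<subseteq> sh_vertices n q \<and> card K = r \<and> sh_profile n q K = \<sigma>}"

definition is_matching :: "'v set set \<Rightarrow> 'v set set \<Rightarrow> bool" where
  "is_matching E M \<longleftrightarrow> M \<subseteq> E \<and> (\<forall>e\<in>M. \<forall>f\<in>M. e \<noteq> f \<longrightarrow> e \<inter> f = {})"

text \<open>Matching number (for finite hypergraphs).\<close>
definition matching_number :: "'v set set \<Rightarrow> nat" where
  "matching_number E = Max {card M | M. is_matching E M}"

end

theory Submission
  imports Defs
begin

text \<open>Index the vertices by \<open>t < n q\<close> via \<open>t \<mapsto> (t mod n, t div n)\<close>. Any \<open>r \<le> n\<close>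
  consecutive indices fall into distinct classes, so cutting the first \<open>r \<lfloor>nq/r\<rfloor>\<close> indices
  into consecutive blocks of length \<open>r\<close> yields a matching of \<open>\<lfloor>nq/r\<rfloor>\<close> edges that misses
  exactly \<open>nq mod r\<close> vertices. Conversely, disjoint \<open>r\<close>-sets cover at most \<open>nq\<close> vertices.\<close>

lemma card_Union_matching:
  assumes "is_matching E M" and "E \<subseteq> Pow V" and "finite V" and "\<forall>e\<in>E. card e = r"
  shows "card (\<Union>M) = r * card M"
proof -
  have "M \<subseteq> E" and disj: "\<forall>e\<in>M. \<forall>f\<in>M. e \<noteq> f \<longrightarrow> e \<inter> f = {}"
    using assms(1) unfolding is_matching_def by auto
  then have "M \<subseteq> Pow V" using assms(2) by blast
  then have "finite M" and fin_edges: "\<forall>e\<in>M. finite e"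
    using assms(3) by (auto intro: finite_subset)
  have "card (\<Union>M) = sum card M"
    using fin_edges disj by (intro card_Union_disjoint) (auto simp: pairwise_def disjnt_def)
  also have "\<dots> = sum (\<lambda>_. r) M"
    using \<open>M \<subseteq> E\<close> assms(4) by (intro sum.cong) auto
  finally show ?thesis by simp
qed

lemma matching_number_eqI:
  assumes "is_matching E M" and "card M = N" and "\<And>M'. is_matching E M' \<Longrightarrow> card M' \<le> N"
  shows "matching_number E = N"
  unfolding matching_number_def
proof (rule Max_eqI)
  show "finite {card M |M. is_matching E M}"
    by (rule finite_subset[of _ "{..N}"]) (auto dest: assms(3))
qed (use assms in auto)

lemma sh_edges_subset_Pow: "sh_edges n r q \<sigma> \<subseteq> Pow (sh_vertices n q)"
  unfolding sh_edges_def by auto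

lemma card_sh_vertices: "card (sh_vertices n q) = n * q"
  by (simp add: sh_vertices_def)

lemma finite_sh_vertices: "finite (sh_vertices n q)"
  by (simp add: sh_vertices_def)

lemma sh_matching_Union_subset:
  "is_matching (sh_edges n r q \<sigma>) M \<Longrightarrow> \<Union>M \<subseteq> sh_vertices n q"
  unfolding is_matching_def sh_edges_def by blast

lemma card_Union_sh_matching:
  assumes "is_matching (sh_edges n r q \<sigma>) M"
  shows "card (\<Union>M) = r * card M"
  using assms sh_edges_subset_Pow finite_sh_vertices
  by (rule card_Union_matching) (simp add: sh_edges_def)

lemma sh_matching_card_le:
  assumes "is_matching (sh_edges n r q \<sigma>) M"
  shows "r * card M \<le> n * q"
  using card_mono[OF finite_sh_vertices sh_matching_Union_subset[OF assms]]
  by (simp add: card_Union_sh_matching[OF assms] card_sh_vertices)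

lemma card_unmatched_sh_vertices:
  assumes "is_matching (sh_edges n r q \<sigma>) M"
  shows "card (sh_vertices n q - \<Union>M) = n * q - r * card M"
proof -
  have "\<Union>M \<subseteq> sh_vertices n q" using sh_matching_Union_subset[OF assms] .
  then show ?thesis
    using finite_sh_vertices card_Union_sh_matching[OF assms]
    by (simp add: card_Diff_subset finite_subset card_sh_vertices)
qed

lemma sh_profile_transversal:
  assumes K: "K \<subseteq> sh_vertices n q" and inj: "inj_on fst K" and card: "card K = r"
  shows "sh_profile n q K = replicate_mset r 1"
proof -
  have "finite K" using K finite_subset unfolding sh_vertices_def by blast
  have meet: "card (K \<inter> sh_class q i) = (if i \<in> fst ` K then 1 else 0)" for i
  proof (cases "i \<in> fst ` K")
    case True
    then obtain x where x: "x \<in> K" "fst x = i" by auto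
    have "y = x" if "y \<in> K \<inter> sh_class q i" for y
      using that x inj unfolding sh_class_def inj_on_def by auto
    moreover have "x \<in> sh_class q i"
      using x K unfolding sh_class_def sh_vertices_def by (cases x) auto
    ultimately have "K \<inter> sh_class q i = {x}" using x by blast
    then show ?thesis using True by simp
  next
    case False
    then have "K \<inter> sh_class q i = {}" unfolding sh_class_def by force
    then show ?thesis using False by simp
  qed
  have support: "{i \<in> {0..<n}. card (K \<inter> sh_class q i) \<noteq> 0} = fst ` K"
    using K meet unfolding sh_vertices_def by (auto split: if_splits)
  have "sh_profile n q K = image_mset (\<lambda>i. card (K \<inter> sh_class q i)) (mset_set (fst ` K))"
    unfolding sh_profile_def filter_mset_image_mset using support by simp
  also have "\<dots> = image_mset (\<lambda>_. 1) (mset_set (fst ` K))"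
    by (rule image_mset_cong) (simp add: meet \<open>finite K\<close>)
  also have "\<dots> = replicate_mset r 1"
    using \<open>finite K\<close> card_image[OF inj] card by (simp add: image_mset_const_eq)
  finally show ?thesis .
qed

lemma inj_on_mod_interval:
  fixes n a r :: nat
  assumes "r \<le> n"
  shows "inj_on (\<lambda>t. t mod n) {a..<a+r}"
proof -
  have "x mod n \<noteq> y mod n" if "x < y" "y < x + n" for x y :: nat
  proof
    assume "x mod n = y mod n"
    then have "n dvd y - x" using mod_eq_dvd_iff_nat[of x y n] \<open>x < y\<close> by simp
    then show False using that by (auto dest: dvd_imp_le)
  qed
  moreover have "y < x + n" if "x \<in> {a..<a+r}" "y \<in> {a..<a+r}" for x y
    using that assms by auto
  ultimately show ?thesis
    unfolding inj_on_def by (metis linorder_neqE_nat)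
qed

definition sh_index_vertex :: "nat \<Rightarrow> nat \<Rightarrow> nat \<times> nat" where
  "sh_index_vertex n t = (t mod n, t div n)"

definition sh_block :: "nat \<Rightarrow> nat \<Rightarrow> nat \<Rightarrow> (nat \<times> nat) set" where
  "sh_block n r k = sh_index_vertex n ` {k*r..<k*r+r}"

lemma inj_sh_index_vertex: "inj (sh_index_vertex n)"
  unfolding sh_index_vertex_def inj_def by (metis div_mult_mod_eq prod.inject)

lemma sh_index_vertex_in_sh_vertices:
  assumes "t < n * q"
  shows "sh_index_vertex n t \<in> sh_vertices n q"
  using assms by (cases "n = 0")
    (auto simp: sh_index_vertex_def sh_vertices_def less_mult_imp_div_less mult.commute)

lemma sh_block_in_sh_edges:
  assumes "r \<le> n" and "k*r + r \<le> n * q"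
  shows "sh_block n r k \<in> sh_edges n r q (replicate_mset r 1)"
proof -
  have sub: "sh_block n r k \<subseteq> sh_vertices n q"
    using assms(2) sh_index_vertex_in_sh_vertices unfolding sh_block_def by fastforce
  have card: "card (sh_block n r k) = r"
    unfolding sh_block_def
    by (subst card_image) (auto intro: inj_on_subset[OF inj_sh_index_vertex])
  have "inj_on (fst \<circ> sh_index_vertex n) {k*r..<k*r+r}"
    using inj_on_mod_interval[OF assms(1)] by (simp add: comp_def sh_index_vertex_def)
  then have "inj_on fst (sh_block n r k)"
    unfolding sh_block_def by (simp add: inj_on_imageI)
  then show ?thesis
    using sub card sh_profile_transversal unfolding sh_edges_def by auto
qed

lemma disjoint_sh_blocks:
  assumes "k \<noteq> k'"
  shows "sh_block n r k \<inter> sh_block n r k' = {}"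
proof -
  have "k*r + r \<le> k'*r" if "k < k'" for k k' :: nat
    using mult_le_mono1[of "Suc k" k' r] that by simp
  then have "{k*r..<k*r+r} \<inter> {k'*r..<k'*r+r} = {}"
    using assms by (cases "k < k'") auto
  then show ?thesis
    unfolding sh_block_def by (simp add: image_Int[OF inj_sh_index_vertex, symmetric])
qed

lemma sh_block_matching:
  fixes n r q :: nat
  assumes "1 \<le> r" and "r \<le> n"
  defines "M \<equiv> sh_block n r ` {..<n * q div r}"
  shows "is_matching (sh_edges n r q (replicate_mset r 1)) M" and "card M = n * q div r"
proof -
  have "k*r + r \<le> n * q" if "k < n * q div r" for k
  proof -
    have "Suc k * r \<le> n * q div r * r" using that by (intro mult_le_mono1) simp
    also have "\<dots> \<le> n * q" by (rule div_times_less_eq_dividend)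
    finally show ?thesis by simp
  qed
  then have "M \<subseteq> sh_edges n r q (replicate_mset r 1)"
    unfolding M_def using sh_block_in_sh_edges[OF assms(2)] by blast
  moreover have "e \<inter> f = {}" if ef: "e \<in> M" "f \<in> M" and "e \<noteq> f" for e f
  proof -
    obtain k k' where blocks: "e = sh_block n r k" "f = sh_block n r k'"
      using ef unfolding M_def by blast
    with \<open>e \<noteq> f\<close> have "k \<noteq> k'" by blast
    then show ?thesis using disjoint_sh_blocks blocks by simp
  qed
  ultimately show "is_matching (sh_edges n r q (replicate_mset r 1)) M"
    unfolding is_matching_def by blast
  have "sh_block n r k \<noteq> {}" for k
    using assms(1) unfolding sh_block_def by auto
  then have "inj_on (sh_block n r) {..<n * q div r}"
    using disjoint_sh_blocks by (metis inj_onI Int_absorb)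
  then show "card M = n * q div r"
    unfolding M_def by (simp add: card_image)
qed

theorem lemma3p6:
  fixes n r q :: nat
  assumes "r \<ge> 1" and "n \<ge> (r + 1)^2" and "q \<ge> r"
  defines "E \<equiv> sh_edges n r q (replicate_mset r 1)"
  shows "(\<exists>M. is_matching E M \<and> card M = matching_number E
            \<and> card (sh_vertices n q - \<Union>M) = (n * q) mod r)
         \<and> matching_number E = (n * q) div r"
proof -
  have "r \<le> n" using assms(2) by (auto simp: power2_eq_square)
  define M where "M = sh_block n r ` {..<n * q div r}"
  have M: "is_matching E M" "card M = n * q div r"
    using sh_block_matching[OF assms(1) \<open>r \<le> n\<close>] unfolding E_def M_def by auto
  have "card M' \<le> n * q div r" if "is_matching E M'" for M'
    using sh_matching_card_le[OF that[unfolded E_def]] assms(1)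
    by (simp add: less_eq_div_iff_mult_less_eq mult.commute)
  then have \<nu>: "matching_number E = n * q div r"
    using matching_number_eqI M by blast
  have "card (sh_vertices n q - \<Union>M) = n * q mod r"
    using card_unmatched_sh_vertices[OF M(1)[unfolded E_def]]
    by (simp add: M(2) minus_mult_div_eq_mod)
  with M \<nu> show ?thesis by auto
qed

end
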